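(* Let $(X,d)$ be a $\delta$-hyperbolic space and $a,b$ isometries of $X$. (i) If there is $x\in X$ with $d(a^px,b^qx)>\max[d(x,a^px),d(x,b^qx)]+2\delta$ for all $(p,q)\in\mathbb Z^*\times\mathbb Z^*$, then the subgroup of $\operatorname{Isom}(X,d)$ generated by $a$ and $b$ is free, freely generated by $a,b$. (ii) If there is $x\in X$ with $d(a^px,b^qx)>\max[d(x,a^px),d(x,b^qx)]+2\delta$ for all $(p,q)\in(\mathbb Z^*\times\mathbb Z^* )\setminus(\mathbb Z^-\times\mathbb Z^-)$, then the semigroup generated by $a$ and $b$ is free.
   Context: $\mathbb Z^*=\mathbb Z\setminus\{0\}$, $\mathbb Z^-$ the negative integers. $\delta$-hyperbolic: geodesic, proper metric space all of whose geodesic triangles are $\delta$-thin in the tripod sense (Gromov products $(y|z)_x=\frac12(d(x,y)+d(x,z)-d(y,z))$; triangle mapped onto its tripod isometrically on each side, points with same image at distance $\le\delta$). A semigroup generated by $\{a,b\}$ is free if distinct nonempty positive words in $a,b$ give distinct elements. *)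

theory Defs
  imports "HOL-Analysis.Analysis"
begin

text \<open>The metric space (X,d) is the whole of a type of class metric_space.\<close>

definition proper_metric :: "'a::metric_space itself \<Rightarrow> bool" where
  "proper_metric _ \<longleftrightarrow> (\<forall>(x::'a) r. compact (cball x r))"

definition geodesic_from :: "'a::metric_space \<Rightarrow> 'a \<Rightarrow> (real \<Rightarrow> 'a) \<Rightarrow> bool" where
  "geodesic_from x y g \<longleftrightarrow> g 0 = x \<and> g (dist x y) = y \<and>
     (\<forall>s\<in>{0..dist x y}. \<forall>t\<in>{0..dist x y}. dist (g s) (g t) = \<bar>s - t\<bar>)"

definition geodesic_metric :: "'a::metric_space itself \<Rightarrow> bool" where
  "geodesic_metric _ \<longleftrightarrow> (\<forall>x y::'a. \<exists>g. geodesic_from x y g)"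

definition gromov_product :: "'a::metric_space \<Rightarrow> 'a \<Rightarrow> 'a \<Rightarrow> real" where
  "gromov_product x y z = (dist x y + dist x z - dist y z) / 2"

text \<open>Tripod thinness of the geodesic triangle with sides gxy (x to y), gxz (x to z),
  gyz (y to z): points of two sides issuing from a common vertex, at the same distance
  t from that vertex, with t at most the Gromov product at that vertex (i.e. points with
  the same image in the tripod), are at distance at most delta.\<close>
definition thin_triangle :: "real \<Rightarrow> 'a::metric_space \<Rightarrow> 'a \<Rightarrow> 'a \<Rightarrow>
    (real \<Rightarrow> 'a) \<Rightarrow> (real \<Rightarrow> 'a) \<Rightarrow> (real \<Rightarrow> 'a) \<Rightarrow> bool" where
  "thin_triangle \<delta> x y z gxy gxz gyz \<longleftrightarrow>
     (\<forall>t. 0 \<le> t \<and> t \<le> gromov_product x y z \<longrightarrow> dist (gxy t) (gxz t) \<le> \<delta>) \<and>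
     (\<forall>t. 0 \<le> t \<and> t \<le> gromov_product y x z \<longrightarrow>
          dist (gxy (dist x y - t)) (gyz t) \<le> \<delta>) \<and>
     (\<forall>t. 0 \<le> t \<and> t \<le> gromov_product z x y \<longrightarrow>
          dist (gxz (dist x z - t)) (gyz (dist y z - t)) \<le> \<delta>)"

definition hyperbolic :: "real \<Rightarrow> 'a::metric_space itself \<Rightarrow> bool" where
  "hyperbolic \<delta> T \<longleftrightarrow> geodesic_metric T \<and> proper_metric T \<and>
     (\<forall>(x::'a) y z gxy gxz gyz. geodesic_from x y gxy \<and> geodesic_from x z gxz \<and>
        geodesic_from y z gyz \<longrightarrow> thin_triangle \<delta> x y z gxy gxz gyz)"

definition isometry :: "('a::metric_space \<Rightarrow> 'a) \<Rightarrow> bool" where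
  "isometry f \<longleftrightarrow> bij f \<and> (\<forall>x y. dist (f x) (f y) = dist x y)"

definition ipow :: "('a \<Rightarrow> 'a) \<Rightarrow> int \<Rightarrow> 'a \<Rightarrow> 'a" where
  "ipow f p = (if 0 \<le> p then f ^^ nat p else (inv f) ^^ nat (- p))"

text \<open>Words in a^{+-1}, b^{+-1}: a letter (g, e) is the generator a if g, b otherwise,
  inverted if e.  A word is reduced if no letter is followed by its inverse.\<close>
fun reduced :: "(bool \<times> bool) list \<Rightarrow> bool" where
  "reduced (l1 # l2 # w) \<longleftrightarrow> \<not> (fst l1 = fst l2 \<and> snd l1 \<noteq> snd l2) \<and> reduced (l2 # w)"
| "reduced _ \<longleftrightarrow> True"

fun eval_word :: "('a \<Rightarrow> 'a) \<Rightarrow> ('a \<Rightarrow> 'a) \<Rightarrow> (bool \<times> bool) list \<Rightarrow> 'a \<Rightarrow> 'a" where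
  "eval_word a b [] = id"
| "eval_word a b ((g, e) # w) =
     (let c = (if g then a else b) in if e then inv c else c) \<circ> eval_word a b w"

definition freely_generate :: "('a \<Rightarrow> 'a) \<Rightarrow> ('a \<Rightarrow> 'a) \<Rightarrow> bool" where
  "freely_generate a b \<longleftrightarrow> (\<forall>w. w \<noteq> [] \<and> reduced w \<longrightarrow> eval_word a b w \<noteq> id)"

fun eval_pos_word :: "('a \<Rightarrow> 'a) \<Rightarrow> ('a \<Rightarrow> 'a) \<Rightarrow> bool list \<Rightarrow> 'a \<Rightarrow> 'a" where
  "eval_pos_word a b [] = id"
| "eval_pos_word a b (g # w) = (if g then a else b) \<circ> eval_pos_word a b w"

definition free_semigroup :: "('a \<Rightarrow> 'a) \<Rightarrow> ('a \<Rightarrow> 'a) \<Rightarrow> bool" where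
  "free_semigroup a b \<longleftrightarrow> (\<forall>u v. u \<noteq> [] \<and> v \<noteq> [] \<and> u \<noteq> v \<longrightarrow>
     eval_pos_word a b u \<noteq> eval_pos_word a b v)"

end

theory Submission
  imports Defs
begin

text \<open>Ping-pong with Gromov shadows.  Seen from the base point x, call the shadow of a point u
  the set of y with (u|y)_x \<ge> d(x,u)/2.  By the four-point condition, the hypothesis
  d(a^p x, b^q x) > max(d(x,a^p x), d(x,b^q x)) + 2\<delta> makes the shadows of a^p x and b^q x
  disjoint, and a^k maps everything outside the shadow of a^-k x into the shadow of a^k x.
  Reading a reduced word from its last syllable, the image of x therefore ends in the shadow of
  its first syllable applied to x, which does not contain x.\<close>

lemma gromov_product_commute: "gromov_product x y z = gromov_product x z y"
  by (simp add: gromov_product_def dist_commute)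

lemma gromov_product_add_swap: "gromov_product x u y + gromov_product u x y = dist x u"
  by (simp add: gromov_product_def dist_commute field_simps)

lemma gromov_product_nonneg: "0 \<le> gromov_product x y z"
  using dist_triangle[of y z x] by (simp add: gromov_product_def dist_commute)

lemma gromov_product_le_dist: "gromov_product x y z \<le> dist x y"
  using dist_triangle[of x z y] by (simp add: gromov_product_def dist_commute)

lemma geodesic_from_dist_end:
  assumes "geodesic_from w x g" "0 \<le> t" "t \<le> dist w x"
  shows "dist (g t) x = dist w x - t"
proof -
  have "g (dist w x) = x" and
    "\<forall>s\<in>{0..dist w x}. \<forall>r\<in>{0..dist w x}. dist (g s) (g r) = \<bar>s - r\<bar>"
    using assms(1) unfolding geodesic_from_def by blast+
  then have "dist (g t) x = \<bar>t - dist w x\<bar>"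
    using assms(2,3) by (metis atLeastAtMost_iff order_refl dual_order.trans)
  then show ?thesis using assms(3) by simp
qed

lemma hyperbolic_gromov_product_ge_min:
  assumes "hyperbolic \<delta> TYPE('a::metric_space)"
  shows "min (gromov_product w x y) (gromov_product w y z) - \<delta> \<le> gromov_product (w::'a) x z"
proof -
  obtain gx gy gz gxy gyz where
    gx: "geodesic_from w x gx" and gy: "geodesic_from w y gy" and gz: "geodesic_from w z gz"
    and gxy: "geodesic_from x y gxy" and gyz: "geodesic_from y z gyz"
    using assms unfolding hyperbolic_def geodesic_metric_def by metis
  have "thin_triangle \<delta> w x y gx gy gxy" "thin_triangle \<delta> w y z gy gz gyz"
    using assms gx gy gz gxy gyz unfolding hyperbolic_def by blast+
  moreover define t where "t = min (gromov_product w x y) (gromov_product w y z)"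
  moreover have t: "0 \<le> t" "t \<le> gromov_product w x y" "t \<le> gromov_product w y z"
    using gromov_product_nonneg[of w x y] gromov_product_nonneg[of w y z] by (auto simp: t_def)
  ultimately have "dist (gx t) (gy t) \<le> \<delta>" "dist (gy t) (gz t) \<le> \<delta>"
    unfolding thin_triangle_def by blast+
  moreover have "dist (gx t) x = dist w x - t" "dist (gz t) z = dist w z - t"
    using t gromov_product_le_dist[of w x y] gromov_product_le_dist[of w z y]
    by (auto intro!: geodesic_from_dist_end gx gz simp: gromov_product_commute[of w y z])
  moreover have "dist x z \<le> dist x (gx t) + dist (gx t) (gy t) + dist (gy t) (gz t) + dist (gz t) z"
    using dist_triangle[of x z "gx t"] dist_triangle[of "gx t" z "gy t"]
      dist_triangle[of "gy t" z "gz t"] by linarith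
  ultimately have "t - \<delta> \<le> gromov_product w x z"
    by (simp add: gromov_product_def dist_commute)
  then show ?thesis by (simp add: t_def)
qed

definition shadow :: "'a::metric_space \<Rightarrow> 'a \<Rightarrow> 'a set" where
  "shadow x u = {y. dist x u \<le> 2 * gromov_product x u y}"

lemma shadow_self [simp]: "u \<in> shadow x u"
  by (simp add: shadow_def gromov_product_def)

lemma shadow_base [simp]: "shadow x x = UNIV"
  by (simp add: shadow_def gromov_product_def)

lemma base_in_shadow_iff: "x \<in> shadow x u \<longleftrightarrow> u = x"
  by (simp add: shadow_def gromov_product_def dist_commute)

lemma in_shadow_swap: "y \<notin> shadow x u \<Longrightarrow> y \<in> shadow u x"
  using gromov_product_add_swap[of x u y] by (simp add: shadow_def dist_commute)

lemma shadow_image: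
  assumes "\<And>p q. dist (f p) (f q) = dist p q" and "y \<in> shadow x u"
  shows "f y \<in> shadow (f x) (f u)"
  using assms by (simp add: shadow_def gromov_product_def)

lemma shadows_disjoint:
  assumes "hyperbolic \<delta> TYPE('a::metric_space)"
    and "max (dist x u) (dist x v) + 2 * \<delta> < dist u v"
  shows "shadow x u \<inter> shadow (x::'a) v = {}"
proof (intro equals0I)
  fix y assume "y \<in> shadow x u \<inter> shadow x v"
  then have "dist x u \<le> 2 * gromov_product x u y" "dist x v \<le> 2 * gromov_product x y v"
    by (auto simp: shadow_def gromov_product_commute[of x y v])
  moreover have "min (gromov_product x u y) (gromov_product x y v) - \<delta> \<le> gromov_product x u v"
    using hyperbolic_gromov_product_ge_min[OF assms(1)] .
  moreover have "min (dist x u) (dist x v) \<le> 2 * min (gromov_product x u y) (gromov_product x y v)"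
    using calculation by linarith
  moreover have "2 * gromov_product x u v < min (dist x u) (dist x v) - 2 * \<delta>"
    using assms(2) unfolding gromov_product_def min_def max_def by (auto split: if_splits)
  ultimately show False by linarith
qed

lemma isometry_inv: "isometry f \<Longrightarrow> isometry (inv f)"
  unfolding isometry_def
  by (metis bij_imp_bij_inv bij_inv_eq_iff)

lemma isometry_funpow: "isometry f \<Longrightarrow> isometry (f ^^ n)"
  by (induction n) (auto simp: isometry_def bij_comp)

lemma isometry_ipow: "isometry f \<Longrightarrow> isometry (ipow f k)"
  unfolding ipow_def by (auto intro: isometry_funpow isometry_inv)

lemma ipow_ipow_uminus:
  assumes "bij f" shows "ipow f k (ipow f (- k) x) = x"
  using fn_o_inv_fn_is_id[OF assms] inv_fn_o_fn_is_id[OF assms]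
  by (auto simp: ipow_def fun_eq_iff)

definition generator :: "('a \<Rightarrow> 'a) \<Rightarrow> ('a \<Rightarrow> 'a) \<Rightarrow> bool \<Rightarrow> 'a \<Rightarrow> 'a" where
  "generator a b g = (if g then a else b)"

lemma eval_word_replicate_append:
  "eval_word a b (replicate m (g, e) @ w) =
     ipow (generator a b g) (if e then - int m else int m) \<circ> eval_word a b w"
proof -
  have "eval_word a b (replicate m (g, e) @ w) =
      ((if e then inv (generator a b g) else generator a b g) ^^ m) \<circ> eval_word a b w"
    by (induction m) (auto simp: generator_def Let_def)
  then show ?thesis by (simp add: ipow_def)
qed

lemma reduced_ConsD: "reduced (l # w) \<Longrightarrow> reduced w"
  by (cases w) auto

lemma reduced_appendD: "reduced (u @ v) \<Longrightarrow> reduced v"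
  by (induction u) (auto dest: reduced_ConsD)

lemma reduced_first_syllable:
  assumes "reduced w" "w \<noteq> []"
  shows "\<exists>m rest. 0 < m \<and> w = replicate m (hd w) @ rest \<and> reduced rest \<and>
           (rest \<noteq> [] \<longrightarrow> fst (hd rest) \<noteq> fst (hd w))"
  using assms
proof (induction w)
  case (Cons l w)
  show ?case
  proof (cases "w \<noteq> [] \<and> fst (hd w) = fst l")
    case True
    then obtain w' where w: "w = hd w # w'" by (cases w) auto
    then have "snd (hd w) = snd l" using Cons.prems(1) True by (metis reduced.simps(1))
    then have "hd w = l" using True by (simp add: prod_eq_iff)
    moreover obtain m rest where "0 < m" "w = replicate m (hd w) @ rest" "reduced rest"
      "rest \<noteq> [] \<longrightarrow> fst (hd rest) \<noteq> fst (hd w)"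
      using Cons True w by (metis reduced_appendD append_Cons append_Nil)
    ultimately show ?thesis by (intro exI[of _ "Suc m"] exI[of _ rest]) auto
  next
    case False
    then show ?thesis using Cons.prems(1) reduced_appendD[of "[l]" w]
      by (intro exI[of _ 1] exI[of _ w]) auto
  qed
qed simp

lemma reduced_syllable_induct [consumes 2, case_names syllable]:
  assumes "reduced w" "w \<noteq> []"
    and "\<And>g e m rest. 0 < m \<Longrightarrow> reduced rest \<Longrightarrow> (rest \<noteq> [] \<Longrightarrow> fst (hd rest) \<noteq> g) \<Longrightarrow>
           (rest \<noteq> [] \<Longrightarrow> P rest) \<Longrightarrow> P (replicate m (g, e) @ rest)"
  shows "P w"
  using assms(1,2)
proof (induction "length w" arbitrary: w rule: less_induct)
  case less
  then obtain m rest where m: "0 < m" "w = replicate m (hd w) @ rest" "reduced rest"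
    "rest \<noteq> [] \<longrightarrow> fst (hd rest) \<noteq> fst (hd w)"
    using reduced_first_syllable by blast
  then have "rest \<noteq> [] \<Longrightarrow> P rest"
    using less.hyps[of rest] by (metis length_append length_replicate less_add_same_cancel2)
  then show ?case
    using assms(3)[of m rest "fst (hd w)" "snd (hd w)"] m by simp
qed

text \<open>S is the set of admissible inversion flags of letters; accordingly an exponent k of a
  syllable is admissible iff k \<noteq> 0 and (k < 0) \<in> S.\<close>

lemma ping_pong:
  fixes P :: "bool \<Rightarrow> int \<Rightarrow> 'a set" and S :: "bool set"
  assumes disjoint: "\<And>g h k j. g \<noteq> h \<Longrightarrow> k \<noteq> 0 \<Longrightarrow> (k < 0) \<in> S \<Longrightarrow> j \<noteq> 0 \<Longrightarrow> (j < 0) \<in> S \<Longrightarrow>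
        P g (- k) \<inter> P h j = {}"
    and maps: "\<And>g k y. k \<noteq> 0 \<Longrightarrow> (k < 0) \<in> S \<Longrightarrow> y \<notin> P g (- k) \<Longrightarrow>
        ipow (generator a b g) k y \<in> P g k"
    and start: "\<And>g k. k \<noteq> 0 \<Longrightarrow> (k < 0) \<in> S \<Longrightarrow> ipow (generator a b g) k x \<in> P g k"
    and "reduced w" "w \<noteq> []" "snd ` set w \<subseteq> S"
  shows "\<exists>k. k \<noteq> 0 \<and> (k < 0) \<in> S \<and> eval_word a b w x \<in> P (fst (hd w)) k"
  using assms(4-6)
proof (induction rule: reduced_syllable_induct)
  case (syllable g e m rest)
  define k where "k = (if e then - int m else int m)"
  have k: "k \<noteq> 0" "(k < 0) \<in> S"
    using syllable.hyps(1) syllable.prems by (auto simp: k_def)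
  have "ipow (generator a b g) k (eval_word a b rest x) \<in> P g k"
  proof (cases "rest = []")
    case True
    then show ?thesis using start k by simp
  next
    case False
    moreover have "snd ` set rest \<subseteq> S" using syllable.prems by auto
    ultimately obtain j where "j \<noteq> 0" "(j < 0) \<in> S" "eval_word a b rest x \<in> P (fst (hd rest)) j"
      using syllable.IH by blast
    then have "eval_word a b rest x \<notin> P g (- k)"
      using disjoint[of g "fst (hd rest)" k j] syllable.hyps(3) False k by auto
    then show ?thesis using maps k by blast
  qed
  then show ?case
    using k syllable.hyps(1) by (auto simp: eval_word_replicate_append k_def)
qed

lemma eval_word_in_shadow:
  fixes a b :: "'a::metric_space \<Rightarrow> 'a"
  assumes "isometry a" "isometry b"
    and disjoint: "\<And>g h k j. g \<noteq> h \<Longrightarrow> k \<noteq> 0 \<Longrightarrow> (k < 0) \<in> S \<Longrightarrow> j \<noteq> 0 \<Longrightarrow> (j < 0) \<in> S \<Longrightarrow>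
        shadow x (ipow (generator a b g) (- k) x) \<inter> shadow x (ipow (generator a b h) j x) = {}"
    and "reduced w" "w \<noteq> []" "snd ` set w \<subseteq> S"
  shows "\<exists>k. k \<noteq> 0 \<and> (k < 0) \<in> S \<and>
    eval_word a b w x \<in> shadow x (ipow (generator a b (fst (hd w))) k x)"
proof (rule ping_pong[where P = "\<lambda>g k. shadow x (ipow (generator a b g) k x)",
      OF disjoint _ _ assms(4-6)])
  fix g k y
  let ?G = "ipow (generator a b g)"
  have iso: "isometry (?G k)"
    using assms(1,2) by (simp add: isometry_ipow generator_def)
  assume "y \<notin> shadow x (?G (- k) x)"
  then have "y \<in> shadow (?G (- k) x) x"
    by (rule in_shadow_swap)
  then have "?G k y \<in> shadow (?G k (?G (- k) x)) (?G k x)"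
    using iso by (simp add: shadow_image isometry_def)
  moreover have "?G k (?G (- k) x) = x"
    using assms(1,2) by (simp add: ipow_ipow_uminus generator_def isometry_def)
  ultimately show "?G k y \<in> shadow x (?G k x)" by simp
qed simp_all

lemma base_notin_shadow_ipow:
  assumes "bij f" and "shadow x (ipow f (- k) x) \<inter> shadow x v = {}"
  shows "x \<notin> shadow x (ipow f k x)"
proof
  assume "x \<in> shadow x (ipow f k x)"
  then have "ipow f (- k) x = x"
    using ipow_ipow_uminus[OF assms(1), of "- k" x] by (simp add: base_in_shadow_iff)
  then show False using assms(2) shadow_self[of v x] by auto
qed

lemma eval_word_ne_id:
  fixes a b :: "'a::metric_space \<Rightarrow> 'a"
  assumes "isometry a" "isometry b"
    and disjoint: "\<And>g h k j. g \<noteq> h \<Longrightarrow> k \<noteq> 0 \<Longrightarrow> (k < 0) \<in> S \<Longrightarrow> j \<noteq> 0 \<Longrightarrow> (j < 0) \<in> S \<Longrightarrow>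
        shadow x (ipow (generator a b g) (- k) x) \<inter> shadow x (ipow (generator a b h) j x) = {}"
    and "reduced w" "w \<noteq> []" "snd ` set w \<subseteq> S"
  shows "eval_word a b w \<noteq> id"
proof -
  obtain k where k: "k \<noteq> 0" "(k < 0) \<in> S"
    and w: "eval_word a b w x \<in> shadow x (ipow (generator a b (fst (hd w))) k x)"
    using eval_word_in_shadow[OF assms] by blast
  have "bij (generator a b (fst (hd w)))"
    using assms(1,2) by (simp add: generator_def isometry_def)
  then have "x \<notin> shadow x (ipow (generator a b (fst (hd w))) k x)"
    using disjoint[of "fst (hd w)" "\<not> fst (hd w)" k k] k by (intro base_notin_shadow_ipow) auto
  then show ?thesis using w by auto
qed

lemma shadows_generator_disjoint:
  fixes a b :: "'a::metric_space \<Rightarrow> 'a"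
  assumes "hyperbolic \<delta> TYPE('a)" and "g \<noteq> h"
    and gap: "\<forall>p q. C p q \<longrightarrow>
        dist (ipow a p x) (ipow b q x) > max (dist x (ipow a p x)) (dist x (ipow b q x)) + 2 * \<delta>"
    and "C k j" "C j k"
  shows "shadow x (ipow (generator a b g) k x) \<inter> shadow x (ipow (generator a b h) j x) = {}"
proof (cases g)
  case True
  then show ?thesis
    using assms shadows_disjoint[OF assms(1), of x "ipow a k x" "ipow b j x"]
    by (simp add: generator_def)
next
  case False
  then show ?thesis
    using assms shadows_disjoint[OF assms(1), of x "ipow b k x" "ipow a j x"]
    by (simp add: generator_def Int_commute dist_commute max.commute)
qed

lemma freely_generate_if_ping_pong:
  fixes a b :: "'a::metric_space \<Rightarrow> 'a"
  assumes "hyperbolic \<delta> TYPE('a)" "isometry a" "isometry b"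
    and gap: "\<forall>p q. p \<noteq> 0 \<and> q \<noteq> 0 \<longrightarrow>
      dist (ipow a p x) (ipow b q x) > max (dist x (ipow a p x)) (dist x (ipow b q x)) + 2 * \<delta>"
  shows "freely_generate a b"
proof -
  have "shadow x (ipow (generator a b g) (- k) x) \<inter> shadow x (ipow (generator a b h) j x) = {}"
    if "g \<noteq> h" "k \<noteq> 0" "(k < 0) \<in> UNIV" "j \<noteq> 0" "(j < 0) \<in> UNIV" for g h k j
    using shadows_generator_disjoint[OF assms(1) that(1) gap] that by simp
  from eval_word_ne_id[OF assms(2,3) this, where S = UNIV] show ?thesis
    unfolding freely_generate_def by simp
qed

lemma eval_pos_word_eq_eval_word:
  "eval_pos_word a b u = eval_word a b (map (\<lambda>g. (g, False)) u)"
  by (induction u) (auto simp: Let_def)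

lemma reduced_map_positive: "reduced (map (\<lambda>g. (g, False)) u)"
  by (induction u rule: induct_list012) auto

lemma inj_eval_pos_word:
  assumes "inj a" "inj b"
    and ne_id: "\<And>u. u \<noteq> [] \<Longrightarrow> eval_pos_word a b u \<noteq> id"
    and heads: "\<And>u v. eval_pos_word a b (True # u) \<noteq> eval_pos_word a b (False # v)"
  shows "inj (eval_pos_word a b)"
proof (rule injI)
  fix u v assume "eval_pos_word a b u = eval_pos_word a b v"
  then show "u = v"
  proof (induction u arbitrary: v)
    case Nil
    then show ?case using ne_id[of v] by (metis eval_pos_word.simps(1))
  next
    case (Cons g u)
    then obtain h v' where v: "v = h # v'"
      using ne_id[of "g # u"] by (metis eval_pos_word.simps(1) neq_Nil_conv list.discI)
    show ?case
    proof (cases "g = h")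
      case True
      have "inj (if g then a else b)" using assms(1,2) by simp
      then have "eval_pos_word a b u = eval_pos_word a b v'"
        using Cons.prems v True by (auto simp: fun_eq_iff inj_eq)
      then show ?thesis using Cons.IH v True by simp
    next
      case False
      then show ?thesis
        using Cons.prems v heads[of u v'] heads[of v' u] by (metis (full_types))
    qed
  qed
qed

lemma eval_pos_word_in_shadow:
  fixes a b :: "'a::metric_space \<Rightarrow> 'a"
  assumes "isometry a" "isometry b"
    and disjoint: "\<And>g h k j. g \<noteq> h \<Longrightarrow> 0 < k \<Longrightarrow> 0 < j \<Longrightarrow>
        shadow x (ipow (generator a b g) (- k) x) \<inter> shadow x (ipow (generator a b h) j x) = {}"
  shows "\<exists>k>0. eval_pos_word a b (g # u) x \<in> shadow x (ipow (generator a b g) k x)"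
    and "v \<noteq> [] \<Longrightarrow> eval_pos_word a b v \<noteq> id"
proof -
  have disjoint': "shadow x (ipow (generator a b g) (- k) x) \<inter> shadow x (ipow (generator a b h) j x) = {}"
    if "g \<noteq> h" "k \<noteq> 0" "(k < 0) \<in> {False}" "j \<noteq> 0" "(j < 0) \<in> {False}" for g h k j
    using that by (intro disjoint) auto
  have word: "reduced (map (\<lambda>g. (g, False)) w)" "snd ` set (map (\<lambda>g. (g, False)) w) \<subseteq> {False}"
    for w
    using reduced_map_positive by auto
  obtain k where "k \<noteq> 0" "(k < 0) \<in> {False}"
    "eval_word a b (map (\<lambda>g. (g, False)) (g # u)) x \<in> shadow x (ipow (generator a b g) k x)"
    using eval_word_in_shadow[OF assms(1,2) disjoint' word(1) _ word(2), of "g # u"] by auto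
  then show "\<exists>k>0. eval_pos_word a b (g # u) x \<in> shadow x (ipow (generator a b g) k x)"
    by (intro exI[of _ k]) (auto simp: eval_pos_word_eq_eval_word)
  show "v \<noteq> [] \<Longrightarrow> eval_pos_word a b v \<noteq> id"
    using eval_word_ne_id[OF assms(1,2) disjoint' word(1) _ word(2), of v]
    by (simp add: eval_pos_word_eq_eval_word)
qed

lemma free_semigroup_if_ping_pong:
  fixes a b :: "'a::metric_space \<Rightarrow> 'a"
  assumes "hyperbolic \<delta> TYPE('a)" "isometry a" "isometry b"
    and gap: "\<forall>p q. p \<noteq> 0 \<and> q \<noteq> 0 \<and> \<not> (p < 0 \<and> q < 0) \<longrightarrow>
      dist (ipow a p x) (ipow b q x) > max (dist x (ipow a p x)) (dist x (ipow b q x)) + 2 * \<delta>"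
  shows "free_semigroup a b"
proof -
  have disjoint: "shadow x (ipow (generator a b g) k x) \<inter> shadow x (ipow (generator a b h) j x) = {}"
    if "g \<noteq> h" "k \<noteq> 0" "j \<noteq> 0" "\<not> (k < 0 \<and> j < 0)" for g h k j
    using shadows_generator_disjoint[OF assms(1) that(1) gap] that by auto
  then have "\<And>g h k j. g \<noteq> h \<Longrightarrow> 0 < k \<Longrightarrow> 0 < j \<Longrightarrow>
      shadow x (ipow (generator a b g) (- k) x) \<inter> shadow x (ipow (generator a b h) j x) = {}"
    by simp
  note in_shadow = eval_pos_word_in_shadow[OF assms(2,3) this]
  have "eval_pos_word a b (True # u) \<noteq> eval_pos_word a b (False # v)" for u v
  proof
    assume eq: "eval_pos_word a b (True # u) = eval_pos_word a b (False # v)"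
    obtain k j where "0 < k" "0 < j"
      and in_a: "eval_pos_word a b (True # u) x \<in> shadow x (ipow (generator a b True) k x)"
      and in_b: "eval_pos_word a b (False # v) x \<in> shadow x (ipow (generator a b False) j x)"
      using in_shadow(1) by blast
    have "shadow x (ipow (generator a b True) k x) \<inter>
        shadow x (ipow (generator a b False) j x) = {}"
      using disjoint[of True False k j] \<open>0 < k\<close> \<open>0 < j\<close> by simp
    with in_a in_b show False unfolding eq by blast
  qed
  then have "inj (eval_pos_word a b)"
    using assms(2,3) in_shadow(2)
    by (intro inj_eval_pos_word) (auto simp: isometry_def bij_is_inj)
  then show ?thesis unfolding free_semigroup_def by (auto dest: injD)
qed

theorem proposition6p5:
  fixes a b :: "'a::metric_space \<Rightarrow> 'a" and \<delta> :: real
  assumes hyp: "hyperbolic \<delta> TYPE('a)"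
    and isoa: "isometry a" and isob: "isometry b"
  shows "((\<exists>x. \<forall>p q. p \<noteq> 0 \<and> q \<noteq> 0 \<longrightarrow>
            dist (ipow a p x) (ipow b q x)
              > max (dist x (ipow a p x)) (dist x (ipow b q x)) + 2 * \<delta>)
           \<longrightarrow> freely_generate a b) \<and>
         ((\<exists>x. \<forall>p q. p \<noteq> 0 \<and> q \<noteq> 0 \<and> \<not> (p < 0 \<and> q < 0) \<longrightarrow>
            dist (ipow a p x) (ipow b q x)
              > max (dist x (ipow a p x)) (dist x (ipow b q x)) + 2 * \<delta>)
           \<longrightarrow> free_semigroup a b)"
  using freely_generate_if_ping_pong[OF hyp isoa isob] free_semigroup_if_ping_pong[OF hyp isoa isob]
  by (intro conjI impI; elim exE) assumption+

end
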